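(* Let $f:[0,\infty)\to[0,\infty)$ be a continuous and non-decreasing function, and let $(x_N)_{N\in\mathbb{N}}$ be a sequence in $[0,1)$. Suppose there exist some $k\in\mathbb{N}$ and infinitely many $N\in\mathbb{N}$ such that the finite point set $x_1,\ldots,x_N$ has at most $k$ distinct gap lengths. Then $(x_N)_{N\in\mathbb{N}}$ does not have $f$-pair correlations; that is, it is not the case that \[ \lim_{N\to\infty}\frac{1}{N}\,\#\left\{1\le i\neq j\le N \;\middle|\; \|x_i-x_j\|\le \frac{s}{N}\right\} = f(s) \] holds for all $s\ge 0$.
   Context: Points of $[0,1)$ are regarded as points of the torus $\mathbb{T}^1=[0,1]/\sim$ (with $0$ and $1$ identified). For $x\in\mathbb{R}$, $\|x\|=\min\{|x-z| : z\in\mathbb{Z}\}$ denotes the distance to the nearest integer. For $s\ge 0$ and $N\in\mathbb{N}$, set $R(s,N)=\#\{1\le i\neq j\le N : \|x_i-x_j\|\le s/N\}$ (counting ordered pairs of distinct indices). A sequence has $f$-pair correlations if $\lim_{N\to\infty}\frac1N R(s,N)=f(s)$ for all $s\ge0$. The gap lengths of a finite point set $x_1,\ldots,x_N$ in $\mathbb{T}^1$ are the distances between neighboring elements on the circle: if $y_1\le y_2\le\cdots\le y_N$ is the nondecreasing rearrangement of $x_1,\ldots,x_N$ (repeated points allowed, so a gap length may be $0$), the gap lengths are the values $\|y_{i+1}-y_i\|$ for $1\le i\le N$, where $y_{N+1}:=y_1$. *)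

theory Defs
  imports "HOL-Analysis.Analysis"
begin

definition nint_dist :: "real \<Rightarrow> real" where
  "nint_dist x = (INF z::int. \<bar>x - of_int z\<bar>)"

definition pair_count :: "(nat \<Rightarrow> real) \<Rightarrow> real \<Rightarrow> nat \<Rightarrow> nat" where
  "pair_count x s N = card {(i, j). i \<in> {1..N} \<and> j \<in> {1..N} \<and> i \<noteq> j \<and>
      nint_dist (x i - x j) \<le> s / real N}"

text \<open>Gap lengths of x_1,...,x_N on the circle (cyclic neighbours of the sorted list).\<close>
definition gap_lengths :: "(nat \<Rightarrow> real) \<Rightarrow> nat \<Rightarrow> real set" where
  "gap_lengths x N = (let y = sort (map x [1..<N+1]) in
      {nint_dist (y ! ((i + 1) mod N) - y ! i) | i. i < N})"

end

theory Submission
  imports Defs "HOL-Combinatorics.Permutations"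
begin

text \<open>
  Sort the points and let \<open>R(s)\<close> count the pairs at distance at most \<open>s/N\<close>. Suppose at most
  \<open>k\<close> gap lengths occur, \<open>Z\<close> of the gaps are nonzero, and \<open>4w \<le> N\<close>. If \<open>4wZ \<le> N\<close>, the sorted
  points form long runs of equal values and \<open>R(0) \<ge> wN/2\<close>. Otherwise, by pigeonhole, some
  nonzero gap length \<open>v\<close> occurs \<open>m \<ge> N/(4wk)\<close> times; these \<open>m\<close> neighbouring pairs lie at distance
  exactly \<open>v\<close>, so \<open>R(s)/N\<close> jumps by at least \<open>1/(4wk)\<close> at \<open>s = Nv\<close>, and \<open>Nv \<le> 4wk\<close> because
  the gaps sum to at most 1. Pointwise convergence of \<open>R(s)/N\<close> to a continuous \<open>f\<close> rules out
  such jumps uniformly on a compact interval, and \<open>w \<ge> 2 f(0) + 2\<close> rules out the first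
  alternative.
\<close>

lemma nint_dist_le: "nint_dist a \<le> \<bar>a - of_int z\<bar>"
  unfolding nint_dist_def by (rule cINF_lower) (auto intro: bdd_belowI[of _ 0])

lemma nint_dist_nonneg: "0 \<le> nint_dist a"
  unfolding nint_dist_def by (rule cINF_greatest) auto

lemma nint_dist_0 [simp]: "nint_dist 0 = 0"
  using nint_dist_le[of 0 0] nint_dist_nonneg[of 0] by simp

lemma nint_dist_eq_min:
  assumes "0 \<le> a" "a \<le> 1"
  shows "nint_dist a = min a (1 - a)"
proof (rule antisym)
  show "nint_dist a \<le> min a (1 - a)"
    using nint_dist_le[of a 0] nint_dist_le[of a 1] assms by auto
  show "min a (1 - a) \<le> nint_dist a"
    unfolding nint_dist_def
  proof (rule cINF_greatest)
    fix z :: int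
    have "real_of_int z \<le> 0 \<or> 1 \<le> real_of_int z" by (cases "z \<le> 0") auto
    then show "min a (1 - a) \<le> \<bar>a - of_int z\<bar>"
      using assms by auto
  qed simp
qed

definition circular_gap :: "real list \<Rightarrow> nat \<Rightarrow> real" where
  "circular_gap y p = nint_dist (y ! (Suc p mod length y) - y ! p)"

definition nonzero_gaps :: "real list \<Rightarrow> nat set" where
  "nonzero_gaps y = {g. g < length y \<and> circular_gap y g \<noteq> 0}"

lemma finite_nonzero_gaps: "finite (nonzero_gaps y)"
  unfolding nonzero_gaps_def by simp

lemma circular_gap_nonneg: "0 \<le> circular_gap y p"
  unfolding circular_gap_def by (rule nint_dist_nonneg)

lemma circular_gap_eq_0_iff:
  assumes "sorted y" "set y \<subseteq> {0..<1}" "Suc p < length y"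
  shows "circular_gap y p = 0 \<longleftrightarrow> y ! Suc p = y ! p"
proof -
  have "y ! p \<in> {0..<1}" "y ! Suc p \<in> {0..<1}"
    using assms(2,3) by (meson Suc_lessD nth_mem subsetD)+
  moreover have "y ! p \<le> y ! Suc p"
    using assms(1,3) by (simp add: sorted_iff_nth_mono)
  ultimately show ?thesis
    using assms(3) by (auto simp: circular_gap_def nint_dist_eq_min min_def)
qed

lemma sum_circular_gap_le_1:
  assumes "sorted y" "set y \<subseteq> {0..<1}"
  shows "(\<Sum>p<length y. circular_gap y p) \<le> 1"
proof (cases y)
  case Nil
  then show ?thesis by simp
next
  case (Cons y0 ys)
  define M where "M = length ys"
  have len: "length y = Suc M" using Cons M_def by simp
  have range: "y ! p \<in> {0..<1}" if "p \<le> M" for p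
    using assms(2) nth_mem[of p y] that len by fastforce
  have inner: "circular_gap y p \<le> y ! Suc p - y ! p" if "p < M" for p
  proof -
    have "y ! p \<le> y ! Suc p"
      using assms(1) that len by (simp add: sorted_iff_nth_mono)
    then show ?thesis
      using nint_dist_le[of "y ! Suc p - y ! p" 0] that len by (simp add: circular_gap_def)
  qed
  have last: "circular_gap y M \<le> 1 - (y ! M - y ! 0)"
  proof -
    have "y ! 0 \<le> y ! M"
      using assms(1) len by (simp add: sorted_iff_nth_mono)
    then show ?thesis
      using nint_dist_le[of "y ! 0 - y ! M" "-1"] range[of 0] range[of M] len
      by (simp add: circular_gap_def)
  qed
  have "(\<Sum>p<length y. circular_gap y p) = (\<Sum>p<M. circular_gap y p) + circular_gap y M"
    using len by simp
  also have "\<dots> \<le> (\<Sum>p<M. y ! Suc p - y ! p) + (1 - (y ! M - y ! 0))"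
    using inner last by (intro add_mono sum_mono) auto
  also have "(\<Sum>p<M. y ! Suc p - y ! p) = y ! M - y ! 0"
    by (rule sum_lessThan_telescope)
  finally show ?thesis by simp
qed

lemma obtain_nonzero_gap_between:
  assumes "sorted y" "set y \<subseteq> {0..<1}" "p < q" "q < length y" "y ! p \<noteq> y ! q"
  obtains g where "p \<le> g" "g < q" "circular_gap y g \<noteq> 0"
proof -
  have "y ! p = y ! q" if zero: "\<And>g. p \<le> g \<Longrightarrow> g < q \<Longrightarrow> circular_gap y g = 0"
  proof -
    from \<open>p < q\<close> have "p \<le> q" by simp
    then show ?thesis
    proof (induction rule: dec_induct)
      case (step g)
      then show ?case
        using zero[of g] circular_gap_eq_0_iff[OF assms(1,2), of g] assms(4) by simp
    qed simp
  qed
  then show thesis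
    using that assms(5) by blast
qed

definition close_pairs :: "real list \<Rightarrow> real \<Rightarrow> (nat \<times> nat) set" where
  "close_pairs y r = {(p, q). p < length y \<and> q < length y \<and> p \<noteq> q \<and> nint_dist (y ! p - y ! q) \<le> r}"

lemma finite_close_pairs: "finite (close_pairs y r)"
  by (rule finite_subset[of _ "{..<length y} \<times> {..<length y}"]) (auto simp: close_pairs_def)

lemma card_close_pairs_jump:
  assumes "0 \<le> a" "a < v" "v \<le> b"
  shows "card (close_pairs y a) + card {p. p < length y \<and> circular_gap y p = v}
    \<le> card (close_pairs y b)"
proof -
  let ?n = "length y"
  let ?G = "{p. p < ?n \<and> circular_gap y p = v}"
  let ?edge = "\<lambda>p. (Suc p mod ?n, p)"
  have inj: "inj_on ?edge ?G"
    by (rule inj_onI) auto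
  have edges: "?edge ` ?G \<subseteq> close_pairs y b - close_pairs y a"
  proof
    fix t assume "t \<in> ?edge ` ?G"
    then obtain p where t: "t = ?edge p" and p: "p < ?n" "circular_gap y p = v"
      by blast
    have "Suc p mod ?n < ?n"
      using p(1) by (intro mod_less_divisor) linarith
    moreover have "Suc p mod ?n \<noteq> p"
      using p assms by (auto simp: circular_gap_def)
    ultimately show "t \<in> close_pairs y b - close_pairs y a"
      using t p assms by (auto simp: close_pairs_def circular_gap_def)
  qed
  have "card (close_pairs y a) + card ?G = card (close_pairs y a \<union> ?edge ` ?G)"
  proof -
    have "close_pairs y a \<inter> ?edge ` ?G = {}"
      using edges by blast
    then show ?thesis
      using card_Un_disjoint[OF finite_close_pairs, of "?edge ` ?G"] card_image[OF inj] by simp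
  qed
  also have "\<dots> \<le> card (close_pairs y b)"
    using edges assms by (intro card_mono finite_close_pairs) (auto simp: close_pairs_def)
  finally show ?thesis .
qed

lemma card_close_pairs_jump_normalized:
  fixes c :: real
  assumes "0 \<le> a" "a < v" "v \<le> b" "0 < length y" "0 < c"
    and "real (length y) \<le> c * real (card {p. p < length y \<and> circular_gap y p = v})"
  shows "real (card (close_pairs y a)) / length y + 1 / c \<le> real (card (close_pairs y b)) / length y"
proof -
  let ?n = "length y"
  let ?m = "card {p. p < ?n \<and> circular_gap y p = v}"
  have "real (card (close_pairs y a)) / ?n + 1 / c = (real (card (close_pairs y a)) + ?n / c) / ?n"
    using assms(4) by (simp add: add_divide_distrib)
  also have "\<dots> \<le> (real (card (close_pairs y a)) + ?m) / ?n"
    using assms(5,6) by (intro divide_right_mono) (simp_all add: field_simps)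
  also have "\<dots> \<le> real (card (close_pairs y b)) / ?n"
    using card_close_pairs_jump[OF assms(1-3), of y] by (intro divide_right_mono) (simp_all flip: of_nat_add)
  finally show ?thesis .
qed

lemma card_window_pairs: "w * (n - w) \<le> card {(p, q). p < q \<and> q < n \<and> q \<le> p + w}"
proof -
  have "card ({..<n - w} \<times> {1..w}) \<le> card {(p, q). p < q \<and> q < n \<and> q \<le> p + w}"
  proof (rule card_inj_on_le[of "\<lambda>(p, d). (p, p + d)"])
    show "finite {(p, q). p < q \<and> q < n \<and> q \<le> p + w}"
      by (rule finite_subset[of _ "{..<n} \<times> {..<n}"]) auto
  qed (auto simp: inj_on_def)
  then show ?thesis by (simp add: mult.commute)
qed

text \<open>Among the pairs of sorted indices at distance at most \<open>w\<close>, those carrying different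
  values straddle a nonzero gap, and each nonzero gap is straddled by at most \<open>w\<^sup>2\<close> of them.\<close>

lemma card_close_pairs_0_lower_bound:
  assumes "sorted y" "set y \<subseteq> {0..<1}"
  shows "w * (length y - w)
    \<le> card (close_pairs y 0) + w * w * card (nonzero_gaps y)"
proof -
  let ?n = "length y"
  let ?T = "{(p, q). p < q \<and> q < ?n \<and> q \<le> p + w}"
  let ?S = "{(p, q) \<in> ?T. y ! p = y ! q}"
  let ?Z = "nonzero_gaps y"
  let ?straddling = "\<lambda>g. {g + 1 - w..g} \<times> {g + 1..g + w}"
  have "card ?S \<le> card (close_pairs y 0)"
    by (intro card_mono finite_close_pairs) (auto simp: close_pairs_def)
  moreover have "card (?T - ?S) \<le> w * w * card ?Z"
  proof -
    have "?T - ?S \<subseteq> (\<Union>g\<in>?Z. ?straddling g)"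
    proof
      fix t assume "t \<in> ?T - ?S"
      then obtain p q where t: "t = (p, q)" and pq: "p < q" "q < ?n" "q \<le> p + w" "y ! p \<noteq> y ! q"
        by auto
      then obtain g where "p \<le> g" "g < q" "circular_gap y g \<noteq> 0"
        using obtain_nonzero_gap_between[OF assms] by blast
      with t pq have "g \<in> ?Z" "t \<in> ?straddling g"
        by (auto simp: nonzero_gaps_def)
      then show "t \<in> (\<Union>g\<in>?Z. ?straddling g)" by blast
    qed
    then have "card (?T - ?S) \<le> card (\<Union>g\<in>?Z. ?straddling g)"
      by (intro card_mono) (auto intro: finite_nonzero_gaps)
    also have "\<dots> \<le> (\<Sum>g\<in>?Z. card (?straddling g))"
      by (rule card_UN_le[OF finite_nonzero_gaps])
    also have "\<dots> \<le> (\<Sum>g\<in>?Z. w * w)"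
      by (intro sum_mono) (auto simp: card_cartesian_product intro!: mult_le_mono)
    finally show ?thesis by (simp add: mult.commute)
  qed
  moreover have "card ?T \<le> card ?S + card (?T - ?S)"
  proof -
    have split: "?S \<union> (?T - ?S) = ?T" by blast
    from card_Un_le[of ?S "?T - ?S"] show ?thesis
      by (simp only: split)
  qed
  ultimately show ?thesis
    using card_window_pairs[of w ?n] by linarith
qed

lemma frequent_nonzero_circular_gap:
  assumes "sorted y" "set y \<subseteq> {0..<1}" "card (circular_gap y ` {..<length y}) \<le> k"
    and "nonzero_gaps y \<noteq> {}"
  obtains v where "0 < v" "card (nonzero_gaps y) \<le> k * card {p. p < length y \<and> circular_gap y p = v}"
    "real (card {p. p < length y \<and> circular_gap y p = v}) * v \<le> 1"
proof -
  let ?n = "length y"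
  let ?Z = "nonzero_gaps y"
  let ?V = "\<lambda>v. {p. p < ?n \<and> circular_gap y p = v}"
  obtain v where v: "v \<in> circular_gap y ` ?Z"
    "card ?Z \<le> card (circular_gap y -` {v} \<inter> ?Z) * card (circular_gap y ` ?Z)"
    using pigeonhole_card[of "circular_gap y" ?Z "circular_gap y ` ?Z"] assms(4) finite_nonzero_gaps
    by auto
  have "0 < v"
    using v(1) circular_gap_nonneg[of y] by (force simp: nonzero_gaps_def order_le_less)
  then have fibre: "circular_gap y -` {v} \<inter> ?Z = ?V v"
    by (auto simp: nonzero_gaps_def)
  have "card (circular_gap y ` ?Z) \<le> card (circular_gap y ` {..<?n})"
    by (intro card_mono finite_imageI image_mono) (auto simp: nonzero_gaps_def)
  with assms(3) have "card (?V v) * card (circular_gap y ` ?Z) \<le> card (?V v) * k"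
    by (intro mult_le_mono2) linarith
  with v(2) have "card ?Z \<le> k * card (?V v)"
    unfolding fibre by (simp only: mult.commute[of k])
  moreover have "real (card (?V v)) * v \<le> 1"
  proof -
    have "real (card (?V v)) * v = (\<Sum>p\<in>?V v. circular_gap y p)"
      by simp
    also have "\<dots> \<le> (\<Sum>p<?n. circular_gap y p)"
      by (intro sum_mono2) (auto simp: circular_gap_nonneg)
    also have "\<dots> \<le> 1"
      by (rule sum_circular_gap_le_1[OF assms(1,2)])
    finally show ?thesis .
  qed
  ultimately show thesis
    using that \<open>0 < v\<close> by blast
qed

lemma card_close_pairs_0_ge_half:
  assumes "sorted y" "set y \<subseteq> {0..<1}" "4 * w \<le> length y"
    and "4 * w * card (nonzero_gaps y) \<le> length y"
  shows "w * length y \<le> 2 * card (close_pairs y 0)"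
proof -
  let ?n = "length y"
  have "4 * (w * w * card (nonzero_gaps y)) \<le> w * ?n"
    using mult_le_mono2[OF assms(4), of w] by (simp add: ac_simps)
  moreover have "4 * (w * w) \<le> w * ?n"
    using mult_le_mono2[OF assms(3), of w] by (simp add: ac_simps)
  moreover have "w * ?n = w * (?n - w) + w * w"
  proof -
    have "?n = (?n - w) + w"
      using assms(3) by simp
    then show ?thesis
      by (metis distrib_left)
  qed
  ultimately show ?thesis
    using card_close_pairs_0_lower_bound[OF assms(1,2), of w] by linarith
qed

lemma close_pairs_jump_at_frequent_gap:
  assumes "sorted y" "set y \<subseteq> {0..<1}" "card (circular_gap y ` {..<length y}) \<le> k"
    and "length y < 4 * w * card (nonzero_gaps y)"
  obtains v where "0 < v" "real (length y) * v \<le> 4 * real w * real k"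
    "\<And>a b. 0 \<le> a \<Longrightarrow> a < v \<Longrightarrow> v \<le> b \<Longrightarrow>
      real (card (close_pairs y a)) / length y + 1 / (4 * real w * real k)
        \<le> real (card (close_pairs y b)) / length y"
proof -
  let ?n = "length y"
  have "nonzero_gaps y \<noteq> {}"
    using assms(4) by auto
  then obtain v where v: "0 < v" "card (nonzero_gaps y) \<le> k * card {p. p < ?n \<and> circular_gap y p = v}"
    "real (card {p. p < ?n \<and> circular_gap y p = v}) * v \<le> 1"
    using frequent_nonzero_circular_gap[OF assms(1-3)] by blast
  define m where "m = card {p. p < ?n \<and> circular_gap y p = v}"
  have n_less: "?n < 4 * w * k * m"
    using less_le_trans[OF assms(4) mult_le_mono2[OF v(2)]] unfolding m_def by (simp only: mult.assoc)
  then have "real ?n < real (4 * w * k * m)"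
    by (simp only: of_nat_less_iff)
  then have n_le: "real ?n \<le> 4 * real w * real k * real m"
    by simp
  have "0 < 4 * w * k * m"
    using n_less by linarith
  then have "0 < w" "0 < k"
    by simp_all
  have "0 < ?n"
    using assms(4) by (auto simp: nonzero_gaps_def)
  have "real ?n * v \<le> 4 * real w * real k * (real m * v)"
    using mult_right_mono[OF n_le, of v] v(1) by (simp add: mult.assoc)
  also have "\<dots> \<le> 4 * real w * real k"
    using v(3) unfolding m_def by (simp add: mult_left_le)
  finally have "real ?n * v \<le> 4 * real w * real k" .
  moreover have "0 < 4 * real w * real k"
    using \<open>0 < w\<close> \<open>0 < k\<close> by simp
  ultimately show thesis
    using that v(1) card_close_pairs_jump_normalized[OF _ _ _ \<open>0 < ?n\<close> _ n_le[unfolded m_def]]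
    by blast
qed

lemma sort_nth_bij_betw:
  obtains \<sigma> where "bij_betw \<sigma> {..<N} {1..N}"
    "\<And>p. p < N \<Longrightarrow> sort (map x [1..<N+1]) ! p = x (\<sigma> p)"
proof -
  let ?xs = "map x [1..<N+1]"
  obtain q where q: "q permutes {..<length ?xs}" "permute_list q ?xs = sort ?xs"
    using mset_eq_permutation[of "sort ?xs" ?xs] by auto
  have len: "length ?xs = N"
    by simp
  have "bij_betw Suc {..<N} {1..N}"
    by (simp only: bij_betw_Suc image_Suc_lessThan)
  then have "bij_betw (Suc \<circ> q) {..<N} {1..N}"
    by (rule bij_betw_trans[OF permutes_imp_bij[OF q(1), unfolded len]])
  moreover have "sort ?xs ! p = x ((Suc \<circ> q) p)" if "p < N" for p
    using permute_list_nth[OF q(1), of p] q permutes_in_image[OF q(1), of p] that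
    by (simp del: upt_Suc)
  ultimately show thesis
    using that by blast
qed

lemma pair_count_eq_card_close_pairs:
  "pair_count x s N = card (close_pairs (sort (map x [1..<N+1])) (s / real N))"
proof -
  obtain \<sigma> where \<sigma>: "bij_betw \<sigma> {..<N} {1..N}"
    "\<And>p. p < N \<Longrightarrow> sort (map x [1..<N+1]) ! p = x (\<sigma> p)"
    using sort_nth_bij_betw[of N x] by blast
  let ?close = "\<lambda>a b. nint_dist (a - b) \<le> s / real N"
  have "bij_betw (map_prod \<sigma> \<sigma>)
      {t \<in> {..<N} \<times> {..<N}. fst t \<noteq> snd t \<and> ?close (x (\<sigma> (fst t))) (x (\<sigma> (snd t)))}
      {t \<in> {1..N} \<times> {1..N}. fst t \<noteq> snd t \<and> ?close (x (fst t)) (x (snd t))}"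
    using \<sigma>(1) by (intro bij_betw_Collect bij_betw_map_prod) (auto simp: bij_betw_def inj_on_def)
  moreover have "pair_count x s N
      = card {t \<in> {1..N} \<times> {1..N}. fst t \<noteq> snd t \<and> ?close (x (fst t)) (x (snd t))}"
    unfolding pair_count_def by (rule arg_cong[where f = card]) auto
  moreover have "close_pairs (sort (map x [1..<N+1])) (s / real N)
      = {t \<in> {..<N} \<times> {..<N}. fst t \<noteq> snd t \<and> ?close (x (\<sigma> (fst t))) (x (\<sigma> (snd t)))}"
    unfolding close_pairs_def using \<sigma>(2) by (auto simp del: upt_Suc)
  ultimately show ?thesis
    by (simp add: bij_betw_same_card)
qed

lemma gap_lengths_eq_circular_gaps:
  "gap_lengths x N = circular_gap (sort (map x [1..<N+1])) ` {..<N}"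
  unfolding gap_lengths_def circular_gap_def by (auto simp: Let_def simp del: upt_Suc)

lemma pair_count_dichotomy:
  assumes "\<And>n. n \<in> {1..N} \<Longrightarrow> x n \<in> {0..<1}" "card (gap_lengths x N) \<le> k" "4 * w \<le> N"
  obtains "real w / 2 \<le> real (pair_count x 0 N) / real N"
  | s where "0 < s" "s \<le> 4 * real w * real k"
    "\<And>a b. 0 \<le> a \<Longrightarrow> a < s \<Longrightarrow> s \<le> b \<Longrightarrow>
      real (pair_count x a N) / real N + 1 / (4 * real w * real k) \<le> real (pair_count x b N) / real N"
proof -
  define y where "y = sort (map x [1..<N+1])"
  have y: "sorted y" "set y \<subseteq> {0..<1}" "length y = N"
    using assms(1) by (auto simp: y_def)
  have R: "\<And>s. pair_count x s N = card (close_pairs y (s / real N))"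
    unfolding y_def by (rule pair_count_eq_card_close_pairs)
  have gaps: "card (circular_gap y ` {..<length y}) \<le> k"
    using assms(2) y(3) unfolding gap_lengths_eq_circular_gaps y_def by simp
  show thesis
  proof (cases "4 * w * card (nonzero_gaps y) \<le> N")
    case True
    then have "w * N \<le> 2 * pair_count x 0 N"
      using card_close_pairs_0_ge_half[OF y(1,2)] assms(3) y(3) R[of 0] by simp
    then have "real (w * N) \<le> real (2 * pair_count x 0 N)"
      by (simp only: of_nat_le_iff)
    then show thesis
      using that(1) assms(3) by (cases "N = 0") (simp_all add: field_simps)
  next
    case False
    then obtain v where v: "0 < v" "real N * v \<le> 4 * real w * real k"
      "\<And>a b. 0 \<le> a \<Longrightarrow> a < v \<Longrightarrow> v \<le> b \<Longrightarrow>
        real (card (close_pairs y a)) / N + 1 / (4 * real w * real k) \<le> real (card (close_pairs y b)) / N"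
      using close_pairs_jump_at_frequent_gap[OF y(1,2) gaps] y(3) by (metis not_le)
    have "0 < N"
      using False y(3) by (cases "N = 0") (auto simp: nonzero_gaps_def)
    show thesis
    proof (rule that(2))
      show "0 < real N * v" "real N * v \<le> 4 * real w * real k"
        using v(1,2) \<open>0 < N\<close> by simp_all
      fix a b assume "0 \<le> a" "a < real N * v" "real N * v \<le> b"
      then have "0 \<le> a / N" "a / N < v" "v \<le> b / N"
        using \<open>0 < N\<close> by (simp_all add: field_simps)
      from v(3)[OF this] show "real (pair_count x a N) / real N + 1 / (4 * real w * real k)
          \<le> real (pair_count x b N) / real N"
        by (simp add: R)
    qed
  qed
qed

lemma obtain_grid_cell:
  fixes h s :: real
  assumes "0 < h" "0 < s"
  obtains j :: nat where "real j * h < s" "s \<le> real (Suc j) * h"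
proof
  let ?j = "nat (\<lceil>s / h\<rceil> - 1)"
  have "0 \<le> \<lceil>s / h\<rceil> - 1"
    using assms by simp
  then have "real ?j < s / h" "s / h \<le> real (Suc ?j)"
    using ceiling_correct[of "s / h"] by simp_all
  then show "real ?j * h < s" "s \<le> real (Suc ?j) * h"
    using assms(1) by (simp_all add: field_simps)
qed

lemma eventually_no_jumps:
  fixes F :: "nat \<Rightarrow> real \<Rightarrow> real" and f :: "real \<Rightarrow> real"
  assumes lim: "\<And>s. 0 \<le> s \<Longrightarrow> (\<lambda>N. F N s) \<longlonglongrightarrow> f s"
    and cont: "continuous_on {0..} f" and "0 < \<eta>"
  shows "eventually (\<lambda>N. \<forall>s\<in>{0<..B}. \<exists>a b. 0 \<le> a \<and> a < s \<and> s \<le> b \<and> F N b < F N a + \<eta>)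
    sequentially"
proof -
  have "uniformly_continuous_on {0..B + 1} f"
    using cont by (intro compact_uniformly_continuous) (auto intro: continuous_on_subset)
  then obtain \<delta> where \<delta>: "0 < \<delta>"
    "\<And>a b. a \<in> {0..B + 1} \<Longrightarrow> b \<in> {0..B + 1} \<Longrightarrow> dist b a < \<delta> \<Longrightarrow> dist (f b) (f a) < \<eta> / 2"
    using \<open>0 < \<eta>\<close> unfolding uniformly_continuous_on_def by (metis half_gt_zero)
  define h where "h = min (\<delta> / 2) 1"
  have h: "0 < h" "h < \<delta>" "h \<le> 1"
    unfolding h_def using \<delta>(1) by auto
  define J where "J = nat \<lceil>B / h\<rceil>"
  have "eventually (\<lambda>N. \<forall>j\<in>{..J}. \<bar>F N (j * h) - f (j * h)\<bar> < \<eta> / 4) sequentially"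
  proof (rule eventually_ball_finite)
    show "\<forall>j\<in>{..J}. eventually (\<lambda>N. \<bar>F N (j * h) - f (j * h)\<bar> < \<eta> / 4) sequentially"
      using lim[THEN tendstoD, of _ "\<eta> / 4"] h(1) \<open>0 < \<eta>\<close> by (simp add: dist_real_def)
  qed simp
  then show ?thesis
  proof (rule eventually_mono)
    fix N assume grid: "\<forall>j\<in>{..J}. \<bar>F N (j * h) - f (j * h)\<bar> < \<eta> / 4"
    show "\<forall>s\<in>{0<..B}. \<exists>a b. 0 \<le> a \<and> a < s \<and> s \<le> b \<and> F N b < F N a + \<eta>"
    proof
      fix s assume s: "s \<in> {0<..B}"
      then obtain j where j: "real j * h < s" "s \<le> real (Suc j) * h"
        using obtain_grid_cell[OF h(1)] by auto
      have "real j < B / h"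
        using j(1) s h(1) by (simp add: field_simps)
      then have "Suc j \<le> J"
        unfolding J_def by linarith
      moreover have "real j * h \<in> {0..B + 1}" "real (Suc j) * h \<in> {0..B + 1}"
        using j s h by (auto simp: algebra_simps)
      ultimately have "\<bar>f (real (Suc j) * h) - f (real j * h)\<bar> < \<eta> / 2"
        "\<bar>F N (real j * h) - f (real j * h)\<bar> < \<eta> / 4"
        "\<bar>F N (real (Suc j) * h) - f (real (Suc j) * h)\<bar> < \<eta> / 4"
        using \<delta>(2)[of "real j * h" "real (Suc j) * h"] h bspec[OF grid, of j] bspec[OF grid, of "Suc j"]
        by (simp_all add: dist_real_def algebra_simps)
      then have "F N (real (Suc j) * h) < F N (real j * h) + \<eta>"
        by linarith
      with j h(1) show "\<exists>a b. 0 \<le> a \<and> a < s \<and> s \<le> b \<and> F N b < F N a + \<eta>"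
        by (intro exI[of _ "real j * h"] exI[of _ "real (Suc j) * h"]) simp
    qed
  qed
qed

theorem theorem2:
  fixes f :: "real \<Rightarrow> real" and x :: "nat \<Rightarrow> real"
  assumes f_nonneg: "\<And>s. s \<ge> 0 \<Longrightarrow> f s \<ge> 0"
    and f_cont: "continuous_on {0..} f"
    and f_mono: "mono_on {0..} f"
    and x_range: "\<And>n. n \<ge> 1 \<Longrightarrow> x n \<in> {0..<1}"
    and few_gaps: "\<exists>k::nat. infinite {N::nat. card (gap_lengths x N) \<le> k}"
  shows "\<not> (\<forall>s\<ge>0. (\<lambda>N. real (pair_count x s N) / real N) \<longlonglongrightarrow> f s)"
proof
  let ?F = "\<lambda>N s. real (pair_count x s N) / real N"
  assume lim: "\<forall>s\<ge>0. (\<lambda>N. ?F N s) \<longlonglongrightarrow> f s"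
  obtain k where k: "infinite {N. card (gap_lengths x N) \<le> k}"
    using few_gaps by blast
  define w where "w = nat \<lceil>2 * f 0\<rceil> + 2"
  define B where "B = 4 * real w * real (Suc k)"
  let ?no_jump = "\<lambda>N. \<forall>s\<in>{0<..B}. \<exists>a b. 0 \<le> a \<and> a < s \<and> s \<le> b \<and> ?F N b < ?F N a + 1 / B"
  have "eventually ?no_jump sequentially"
    by (rule eventually_no_jumps) (use lim f_cont in \<open>simp_all add: B_def w_def\<close>)
  moreover have "eventually (\<lambda>N. ?F N 0 < f 0 + 1) sequentially"
    using lim by (intro order_tendstoD(2)[of _ "f 0"]) simp_all
  moreover have "eventually (\<lambda>N. 4 * w \<le> N) sequentially"
    by (rule eventually_ge_at_top)
  moreover have "frequently (\<lambda>N. card (gap_lengths x N) \<le> k) sequentially"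
    using k by (simp add: frequently_cofinite cofinite_eq_sequentially[symmetric])
  ultimately have "frequently (\<lambda>N. (?no_jump N \<and> ?F N 0 < f 0 + 1 \<and> 4 * w \<le> N)
      \<and> card (gap_lengths x N) \<le> k) sequentially"
    by (intro frequently_eventually_conj eventually_conj)
  then obtain N where N: "?no_jump N" "?F N 0 < f 0 + 1" "4 * w \<le> N" "card (gap_lengths x N) \<le> Suc k"
    by (blast dest: frequently_ex intro: le_SucI)
  have range: "\<And>n. n \<in> {1..N} \<Longrightarrow> x n \<in> {0..<1}"
    using x_range by simp
  show False
  proof (rule pair_count_dichotomy[OF range N(4,3)])
    assume "real w / 2 \<le> ?F N 0"
    moreover have "f 0 + 1 \<le> real w / 2"
      using real_nat_ceiling_ge[of "2 * f 0"] unfolding w_def by simp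
    ultimately show False
      using N(2) by linarith
  next
    fix s assume "0 < s" "s \<le> 4 * real w * real (Suc k)"
      and jump: "\<And>a b. 0 \<le> a \<Longrightarrow> a < s \<Longrightarrow> s \<le> b \<Longrightarrow>
        ?F N a + 1 / (4 * real w * real (Suc k)) \<le> ?F N b"
    then have "s \<in> {0<..B}"
      unfolding B_def by simp
    with N(1) obtain a b where "0 \<le> a" "a < s" "s \<le> b" "?F N b < ?F N a + 1 / B"
      by blast
    with jump[of a b] show False
      unfolding B_def by linarith
  qed
qed

end
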